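(* Consider the continuous-time Markov process on $\mathbb N_0=\{0,1,2,\dots\}$ with rates $q(0,1)=1$, and for $x\ge1$: $q(x,x+1)=\frac{2x+1}{4x}$, $q(x,x-1)=1-\frac{2x+1}{4x}$, all other rates $0$. Consider the $2$-leg spider walk with local configurations $L(x)=\{(x,x+1),(x,x+2)\}$, $x\in\mathbb N_0$, i.e. the process on $\{(x,x+1),(x,x+2):x\ge0\}$ in which a leg at $y$ jumps to $y\pm1$ at rate $q(y,y\pm1)$ provided the resulting configuration is again of this form (legs distinct, at distance at most $2$, inside $\mathbb N_0$). Then the Markov process is recurrent whereas the spider walk is transient.
   Context: A continuous-time Markov process is called recurrent/transient if its jump chain, with transition probabilities $p(x,y)=q(x,y)/\sum_{z\ne x}q(x,z)$ for $y\ne x$, is recurrent/transient. *)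

theory Defs
  imports "HOL-Analysis.Analysis"
begin

text \<open>A continuous-time Markov process is given by a countable state set S and
jump rates q x y (for x \<noteq> y).\<close>

definition jump_prob :: "'a set \<Rightarrow> ('a \<Rightarrow> 'a \<Rightarrow> real) \<Rightarrow> 'a \<Rightarrow> 'a \<Rightarrow> real" where
  "jump_prob S q x y =
     (if y \<noteq> x \<and> y \<in> S then q x y / (\<Sum>\<^sub>\<infinity>z\<in>S - {x}. q x z) else 0)"

text \<open>First-passage probabilities of the jump chain: first_passage S q n x y is the
probability that the jump chain started at x hits y for the first time (at a
positive time) exactly at step n.\<close>

fun first_passage :: "'a set \<Rightarrow> ('a \<Rightarrow> 'a \<Rightarrow> real) \<Rightarrow> nat \<Rightarrow> 'a \<Rightarrow> 'a \<Rightarrow> real" where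
  "first_passage S q 0 x y = 0"
| "first_passage S q (Suc n) x y =
     (if n = 0 then jump_prob S q x y
      else (\<Sum>\<^sub>\<infinity>z\<in>S - {y}. jump_prob S q x z * first_passage S q n z y))"

definition return_prob :: "'a set \<Rightarrow> ('a \<Rightarrow> 'a \<Rightarrow> real) \<Rightarrow> 'a \<Rightarrow> real" where
  "return_prob S q x = (\<Sum>n. first_passage S q n x x)"

definition recurrent_state :: "'a set \<Rightarrow> ('a \<Rightarrow> 'a \<Rightarrow> real) \<Rightarrow> 'a \<Rightarrow> bool" where
  "recurrent_state S q x \<longleftrightarrow> summable (\<lambda>n. first_passage S q n x x) \<and> return_prob S q x = 1"

definition transient_state :: "'a set \<Rightarrow> ('a \<Rightarrow> 'a \<Rightarrow> real) \<Rightarrow> 'a \<Rightarrow> bool" where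
  "transient_state S q x \<longleftrightarrow> summable (\<lambda>n. first_passage S q n x x) \<and> return_prob S q x < 1"

text \<open>The process is recurrent/transient iff its jump chain is, i.e. iff every state is.\<close>

definition recurrent_process :: "'a set \<Rightarrow> ('a \<Rightarrow> 'a \<Rightarrow> real) \<Rightarrow> bool" where
  "recurrent_process S q \<longleftrightarrow> (\<forall>x\<in>S. recurrent_state S q x)"

definition transient_process :: "'a set \<Rightarrow> ('a \<Rightarrow> 'a \<Rightarrow> real) \<Rightarrow> bool" where
  "transient_process S q \<longleftrightarrow> (\<forall>x\<in>S. transient_state S q x)"

definition qrate :: "nat \<Rightarrow> nat \<Rightarrow> real" where
  "qrate x y =
     (if x = 0 then (if y = 1 then 1 else 0)
      else if y = x + 1 then (2 * real x + 1) / (4 * real x)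
      else if y + 1 = x then 1 - (2 * real x + 1) / (4 * real x)
      else 0)"

text \<open>The 2-leg spider: configurations {x, x+1} and {x, x+2}, written as ordered
pairs (smaller leg, larger leg).\<close>

definition spider_states :: "(nat \<times> nat) set" where
  "spider_states = {(x, x + 1) | x. True} \<union> {(x, x + 2) | x. True}"

definition adjacent :: "nat \<Rightarrow> nat \<Rightarrow> bool" where
  "adjacent y y' \<longleftrightarrow> y' = Suc y \<or> Suc y' = y"

definition spider_rate :: "nat \<times> nat \<Rightarrow> nat \<times> nat \<Rightarrow> real" where
  "spider_rate c c' =
     (if c' \<in> spider_states \<and> snd c' = snd c \<and> adjacent (fst c) (fst c')
        then qrate (fst c) (fst c') else 0)
   + (if c' \<in> spider_states \<and> fst c' = fst c \<and> adjacent (snd c) (snd c')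
        then qrate (snd c) (snd c') else 0)"

end

theory Submission
  imports Defs
begin

(* Both jump chains in the theorem are birth-death chains on the naturals,
   reflected at 0: from a the chain steps to a+1 with probability up a and to a-1
   with probability 1 - up a, where up 0 = 1.  For the Markov process on N_0 this
   is immediate; for the spider, the configurations (x,x+1), (x,x+2) are listed
   as 0,1,2,3,... by c |-> (c div 2, (c+3) div 2), and every admissible leg move
   changes this index by exactly one.

   For a general
   birth-death chain it then shows, with the hitting probabilities of a state b
   and the classical potential-theoretic argument (harmonic functions above b are
   multiples of the scale function, hitting probabilities are the minimal
   superharmonic majorant), that b is recurrent iff the series of products
   prod_{i=b+1}^{b+j} (1 - up i) / up i diverges.  Finally these products are
   computed: for the process on N_0 they are comparable to 1/j (divergent), for
   the spider they are O(1/j^2) (convergent). *)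

section \<open>Birth-death chains on the naturals\<close>

definition bd_step :: "(nat \<Rightarrow> real) \<Rightarrow> nat \<Rightarrow> nat \<Rightarrow> real" where
  "bd_step up a c = (if c = Suc a then up a else if Suc c = a then 1 - up a else 0)"

text \<open>The taboo operator: one step from z followed by f, where the step into the
  taboo state b is suppressed.  It is the birth-death form of the sum over S - {b}
  in the definition of first_passage.\<close>

definition bd_taboo :: "(nat \<Rightarrow> real) \<Rightarrow> nat \<Rightarrow> (nat \<Rightarrow> real) \<Rightarrow> nat \<Rightarrow> real" where
  "bd_taboo up b f z = (if Suc z \<noteq> b then up z else 0) * f (Suc z)
     + (if 0 < z \<and> z - 1 \<noteq> b then 1 - up z else 0) * f (z - 1)"

fun bd_first_passage :: "(nat \<Rightarrow> real) \<Rightarrow> nat \<Rightarrow> nat \<Rightarrow> nat \<Rightarrow> real" where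
  "bd_first_passage up 0 a b = 0"
| "bd_first_passage up (Suc n) a b =
     (if n = 0 then bd_step up a b else bd_taboo up b (\<lambda>w. bd_first_passage up n w b) a)"

lemma bd_first_passage_1 [simp]: "bd_first_passage up (Suc 0) a b = bd_step up a b"
  by simp

lemma bd_first_passage_SS [simp]:
  "bd_first_passage up (Suc (Suc n)) a b = bd_taboo up b (\<lambda>w. bd_first_passage up (Suc n) w b) a"
  by simp

declare bd_first_passage.simps(2) [simp del]

lemma infsum_neighbours:
  fixes X :: "nat \<Rightarrow> real"
  assumes "\<And>c. c \<noteq> Suc a \<Longrightarrow> Suc c \<noteq> a \<Longrightarrow> X c = 0"
  shows "infsum X (UNIV - {b}) = (if Suc a \<noteq> b then X (Suc a) else 0)
     + (if 0 < a \<and> a - 1 \<noteq> b then X (a - 1) else 0)"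
proof -
  define F where "F = ({Suc a} \<union> (if 0 < a then {a - 1} else {})) - {b}"
  have "infsum X (UNIV - {b}) = infsum X F"
    by (rule infsum_cong_neutral) (use assms in \<open>auto simp: F_def split: if_splits\<close>)
  also have "\<dots> = sum X F" by (simp add: F_def)
  also have "\<dots> = (if Suc a \<noteq> b then X (Suc a) else 0)
     + (if 0 < a \<and> a - 1 \<noteq> b then X (a - 1) else 0)"
    by (cases a) (auto simp: F_def insert_Diff_if)
  finally show ?thesis .
qed

lemma infsum_enumeration:
  assumes "bij_betw enc UNIV S"
  shows "infsum f (S - {enc b}) = infsum (\<lambda>c. f (enc c)) (UNIV - {b})"
proof -
  have inj: "inj enc" using assms by (simp add: bij_betw_def)
  have S: "S - {enc b} = enc ` (UNIV - {b})"
    using assms by (auto simp: bij_betw_def inj_eq)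
  show ?thesis
    unfolding S using inj by (subst infsum_reindex) (auto intro: inj_on_subset simp: o_def)
qed

lemma first_passage_enumeration:
  assumes bij: "bij_betw enc UNIV S"
    and step: "\<And>a c. jump_prob S q (enc a) (enc c) = bd_step up a c"
  shows "first_passage S q n (enc a) (enc b) = bd_first_passage up n a b"
proof (induction n arbitrary: a)
  case 0
  then show ?case by simp
next
  case (Suc n)
  show ?case
  proof (cases n)
    case 0
    then show ?thesis by (simp add: step)
  next
    case (Suc m)
    have "first_passage S q (Suc n) (enc a) (enc b)
        = infsum (\<lambda>c. jump_prob S q (enc a) (enc c) * first_passage S q n (enc c) (enc b)) (UNIV - {b})"
      using Suc by (simp add: infsum_enumeration[OF bij])
    also have "\<dots> = infsum (\<lambda>c. bd_step up a c * bd_first_passage up n c b) (UNIV - {b})"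
      by (simp add: step Suc.IH)
    also have "\<dots> = bd_taboo up b (\<lambda>w. bd_first_passage up n w b) a"
      by (subst infsum_neighbours[where a=a]) (auto simp: bd_step_def bd_taboo_def)
    finally show ?thesis using Suc by (simp add: bd_first_passage.simps(2))
  qed
qed

definition bd_avg :: "(nat \<Rightarrow> real) \<Rightarrow> (nat \<Rightarrow> real) \<Rightarrow> nat \<Rightarrow> real" where
  "bd_avg up f z = up z * f (Suc z) + (if 0 < z then (1 - up z) * f (z - 1) else 0)"

definition bd_ratio :: "(nat \<Rightarrow> real) \<Rightarrow> nat \<Rightarrow> real" where
  "bd_ratio up i = (1 - up i) / up i"

definition bd_ratio_prod :: "(nat \<Rightarrow> real) \<Rightarrow> nat \<Rightarrow> nat \<Rightarrow> real" where
  "bd_ratio_prod up b j = (\<Prod>i\<in>{Suc b..b + j}. bd_ratio up i)"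

definition bd_scale :: "(nat \<Rightarrow> real) \<Rightarrow> nat \<Rightarrow> nat \<Rightarrow> real" where
  "bd_scale up b w = (\<Sum>j<w - b. bd_ratio_prod up b j)"

definition bd_partial_reach :: "(nat \<Rightarrow> real) \<Rightarrow> nat \<Rightarrow> nat \<Rightarrow> nat \<Rightarrow> real" where
  "bd_partial_reach up b N z = (\<Sum>n<N. bd_first_passage up (Suc n) z b)"

definition bd_reach :: "(nat \<Rightarrow> real) \<Rightarrow> nat \<Rightarrow> nat \<Rightarrow> real" where
  "bd_reach up b z = (\<Sum>n. bd_first_passage up (Suc n) z b)"

locale birth_death =
  fixes up :: "nat \<Rightarrow> real"
  assumes up_0: "up 0 = 1" and up_pos: "\<And>a. 0 < up a" and up_lt_1: "\<And>a. 0 < a \<Longrightarrow> up a < 1"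
begin

lemma up_le_1: "up a \<le> 1"
  using up_0 up_lt_1[of a] by (cases a) auto

lemma bd_ratio_prod_nonneg: "0 \<le> bd_ratio_prod up b j"
  unfolding bd_ratio_prod_def bd_ratio_def
  by (intro prod_nonneg ballI divide_nonneg_pos) (simp_all add: up_le_1 up_pos)

lemma bd_ratio_prod_Suc: "bd_ratio_prod up b (Suc j) = bd_ratio_prod up b j * bd_ratio up (b + Suc j)"
  unfolding bd_ratio_prod_def by (simp add: prod.nat_ivl_Suc' mult.commute)

lemma bd_avg_mono: "(\<And>w. f w \<le> g w) \<Longrightarrow> bd_avg up f z \<le> bd_avg up g z"
  using up_pos[of z] up_le_1[of z] by (auto simp: bd_avg_def intro!: add_mono mult_left_mono)

lemma bd_avg_const: "bd_avg up (\<lambda>_. c) z = c"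
  using up_0 by (cases z) (auto simp: bd_avg_def algebra_simps)

lemma bd_avg_affine: "bd_avg up (\<lambda>w. c - f w / d) z = c - bd_avg up f z / d"
  using up_0 by (cases z) (auto simp: bd_avg_def algebra_simps diff_divide_distrib add_divide_distrib)

lemma tendsto_bd_avg:
  "(\<And>w. (\<lambda>N. f N w) \<longlonglongrightarrow> g w) \<Longrightarrow> (\<lambda>N. bd_avg up (f N) z) \<longlonglongrightarrow> bd_avg up g z"
  unfolding bd_avg_def by (cases "0 < z") (auto intro!: tendsto_intros)

subsection \<open>Hitting probabilities\<close>

lemma bd_taboo_nonneg: "(\<And>w. 0 \<le> f w) \<Longrightarrow> 0 \<le> bd_taboo up b f z"
  unfolding bd_taboo_def using up_pos[of z] up_le_1[of z] by (auto intro!: add_nonneg_nonneg)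

lemma bd_first_passage_nonneg: "0 \<le> bd_first_passage up n z b"
  by (induction n arbitrary: z)
     (auto simp: bd_first_passage.simps(2) bd_step_def up_le_1 less_imp_le[OF up_pos]
           intro!: bd_taboo_nonneg)

text \<open>A first step into b counts as a hit; this merges the two terms of the
  first-passage recursion into one average.\<close>

lemma step_plus_taboo:
  "bd_step up z b + bd_taboo up b g z = bd_avg up (\<lambda>w. if w = b then 1 else g w) z"
  by (cases z) (auto simp: bd_step_def bd_taboo_def bd_avg_def)

lemma bd_partial_reach_Suc:
  "bd_partial_reach up b (Suc N) z = bd_avg up (\<lambda>w. if w = b then 1 else bd_partial_reach up b N w) z"
proof -
  have "bd_partial_reach up b (Suc N) z
      = bd_step up z b + (\<Sum>n<N. bd_taboo up b (\<lambda>w. bd_first_passage up (Suc n) w b) z)"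
    unfolding bd_partial_reach_def by (subst sum.lessThan_Suc_shift) simp
  also have "\<dots> = bd_step up z b + bd_taboo up b (bd_partial_reach up b N) z"
    by (simp add: bd_taboo_def bd_partial_reach_def sum.distrib sum_distrib_left)
  finally show ?thesis by (simp add: step_plus_taboo)
qed

lemma bd_partial_reach_le_superharmonic:
  assumes nonneg: "\<And>w. 0 \<le> g w" and at_b: "1 \<le> g b" and super: "\<And>z. bd_avg up g z \<le> g z"
  shows "bd_partial_reach up b N z \<le> g z"
proof (induction N arbitrary: z)
  case 0
  then show ?case by (simp add: bd_partial_reach_def nonneg)
next
  case (Suc N)
  have "bd_partial_reach up b (Suc N) z \<le> bd_avg up g z"
    unfolding bd_partial_reach_Suc by (rule bd_avg_mono) (use Suc at_b in auto)
  also have "\<dots> \<le> g z" by (rule super)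
  finally show ?case .
qed

lemma bd_partial_reach_le_1: "bd_partial_reach up b N z \<le> 1"
  using bd_partial_reach_le_superharmonic[of "\<lambda>_. 1"] by (simp add: bd_avg_const)

lemma summable_first_passage: "summable (\<lambda>n. bd_first_passage up (Suc n) z b)"
  by (rule summableI_nonneg_bounded[where x=1])
     (use bd_partial_reach_le_1 bd_first_passage_nonneg in \<open>auto simp: bd_partial_reach_def\<close>)

lemma bd_partial_reach_tendsto: "(\<lambda>N. bd_partial_reach up b N z) \<longlonglongrightarrow> bd_reach up b z"
  unfolding bd_partial_reach_def bd_reach_def by (rule summable_LIMSEQ[OF summable_first_passage])

lemma bd_reach_le_superharmonic:
  assumes "\<And>w. 0 \<le> g w" "1 \<le> g b" "\<And>z. bd_avg up g z \<le> g z"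
  shows "bd_reach up b z \<le> g z"
  using bd_partial_reach_tendsto
  by (rule LIMSEQ_le_const2) (use bd_partial_reach_le_superharmonic[OF assms] in auto)

lemma bd_reach_bounds: "0 \<le> bd_reach up b z" "bd_reach up b z \<le> 1"
  using bd_reach_le_superharmonic[of "\<lambda>_. 1"] summable_first_passage
  by (auto simp: bd_avg_const bd_reach_def bd_first_passage_nonneg intro: suminf_nonneg)

lemma bd_reach_first_step: "bd_reach up b z = bd_avg up (\<lambda>w. if w = b then 1 else bd_reach up b w) z"
proof -
  have "(\<lambda>N. bd_partial_reach up b (Suc N) z) \<longlonglongrightarrow> bd_reach up b z"
    using bd_partial_reach_tendsto by (rule LIMSEQ_Suc)
  moreover have "(\<lambda>N. bd_partial_reach up b (Suc N) z)
      \<longlonglongrightarrow> bd_avg up (\<lambda>w. if w = b then 1 else bd_reach up b w) z"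
    unfolding bd_partial_reach_Suc by (intro tendsto_bd_avg) (simp add: bd_partial_reach_tendsto)
  ultimately show ?thesis by (rule LIMSEQ_unique)
qed

lemma return_prob_eq_reach:
  "summable (\<lambda>n. bd_first_passage up n z b) \<and> (\<Sum>n. bd_first_passage up n z b) = bd_reach up b z"
proof -
  have s: "summable (\<lambda>n. bd_first_passage up n z b)"
    using summable_first_passage by (rule summable_Suc_iff[THEN iffD1])
  then show ?thesis using suminf_split_head[OF s] by (simp add: bd_reach_def)
qed

subsection \<open>Harmonic functions and the scale function\<close>

lemma harmonic_increment:
  assumes "u z = bd_avg up u z" "0 < z"
  shows "u (Suc z) - u z = bd_ratio up z * (u z - u (z - 1))"
proof -
  have "up z * (u (Suc z) - u z) = (1 - up z) * (u z - u (z - 1))"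
    using assms by (simp add: bd_avg_def algebra_simps)
  then show ?thesis using up_pos[of z] by (simp add: bd_ratio_def field_simps)
qed

lemma bd_scale_le: "w \<le> b \<Longrightarrow> bd_scale up b w = 0"
  by (simp add: bd_scale_def)

lemma bd_scale_shift_Suc: "bd_scale up b (b + Suc k) = bd_scale up b (b + k) + bd_ratio_prod up b k"
  by (simp add: bd_scale_def)

lemma harmonic_above:
  assumes harm: "\<And>z. b < z \<Longrightarrow> u z = bd_avg up u z"
  shows "u (b + k) = u b + (u (Suc b) - u b) * bd_scale up b (b + k)"
proof -
  have incr: "u (b + Suc j) - u (b + j) = (u (Suc b) - u b) * bd_ratio_prod up b j" for j
  proof (induction j)
    case 0
    then show ?case by (simp add: bd_ratio_prod_def)
  next
    case (Suc j)
    have "u (Suc (b + Suc j)) - u (b + Suc j) = bd_ratio up (b + Suc j) * (u (b + Suc j) - u (b + j))"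
      using harmonic_increment[OF harm] by simp
    then show ?case using Suc by (simp add: bd_ratio_prod_Suc)
  qed
  show ?thesis
  proof (induction k)
    case 0
    then show ?case by (simp add: bd_scale_le)
  next
    case (Suc k)
    then show ?case using incr[of k] bd_scale_shift_Suc[of b k] by (simp add: algebra_simps)
  qed
qed

text \<open>A function harmonic below b is constant on [0, b], because 0 is reflecting.\<close>

lemma harmonic_below:
  assumes harm: "\<And>z. z < b \<Longrightarrow> u z = bd_avg up u z" and "w \<le> b"
  shows "u w = u 0"
proof -
  have step: "u (Suc z) = u z" if "z < b" for z
    using that
  proof (induction z)
    case 0
    then show ?case using harm[of 0] up_0 by (simp add: bd_avg_def)
  next
    case (Suc z)
    then show ?case using harmonic_increment[OF harm, of "Suc z"] by simp
  qed
  show ?thesis using \<open>w \<le> b\<close> by (induction w) (simp_all add: step)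
qed

lemma bd_scale_subharmonic: "bd_scale up b z \<le> bd_avg up (bd_scale up b) z"
proof (cases "b < z")
  case True
  then obtain k where k: "z = b + Suc k" by (auto simp: less_iff_Suc_add)
  have balance: "up z * bd_ratio_prod up b (Suc k) = (1 - up z) * bd_ratio_prod up b k"
    using up_pos[of z] k by (simp add: bd_ratio_prod_Suc bd_ratio_def)
  have above: "bd_scale up b (Suc z) = bd_scale up b z + bd_ratio_prod up b (Suc k)"
    using k bd_scale_shift_Suc[of b "Suc k"] by simp
  have below: "bd_scale up b z = bd_scale up b (z - 1) + bd_ratio_prod up b k"
    using k bd_scale_shift_Suc[of b k] by simp
  have "bd_avg up (bd_scale up b) z = up z * bd_scale up b (Suc z) + (1 - up z) * bd_scale up b (z - 1)"
    using k by (simp add: bd_avg_def)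
  also have "\<dots> = bd_scale up b z + (up z * bd_ratio_prod up b (Suc k) - (1 - up z) * bd_ratio_prod up b k)"
    using above below by (simp add: algebra_simps)
  finally show ?thesis by (simp add: balance)
next
  case False
  then show ?thesis
    using up_pos[of z] up_le_1[of z]
    by (auto simp: bd_scale_le bd_avg_def bd_scale_def bd_ratio_prod_nonneg sum_nonneg intro!: add_nonneg_nonneg)
qed

subsection \<open>The recurrence criterion\<close>

text \<open>Divergence of the scale function forces return to b with probability 1:
  one minus the hitting probability is harmonic off b, bounded and zero at b.\<close>

lemma recurrent_if_not_summable:
  assumes not_summable: "\<not> summable (bd_ratio_prod up b)"
  shows "bd_reach up b b = 1"
proof -
  define hit where "hit = (\<lambda>w. if w = b then 1 else bd_reach up b w)"
  define u where "u = (\<lambda>w. 1 - hit w)"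
  have harm: "u z = bd_avg up u z" if "z \<noteq> b" for z
  proof -
    have "hit z = bd_avg up hit z" using that bd_reach_first_step[of b z] by (simp add: hit_def)
    then show ?thesis using bd_avg_affine[of 1 hit 1 z] by (simp add: u_def)
  qed
  have harm_above: "u z = bd_avg up u z" if "b < z" for z
    using that by (intro harm) simp
  have harm_below: "u z = bd_avg up u z" if "z < b" for z
    using that by (intro harm) simp
  have u_b: "u b = 0" by (simp add: u_def hit_def)
  have u_bounds: "0 \<le> u w" "u w \<le> 1" for w
    using bd_reach_bounds[of b w] by (auto simp: u_def hit_def)
  have right: "u (Suc b) = 0"
  proof (rule ccontr)
    assume "u (Suc b) \<noteq> 0"
    then have pos: "0 < u (Suc b)" using u_bounds[of "Suc b"] by simp
    have "u (Suc b) * bd_scale up b (b + k) \<le> 1" for k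
      using harmonic_above[of b u k, OF harm_above] u_b u_bounds[of "b + k"] by simp
    then have "summable (bd_ratio_prod up b)"
      by (intro summableI_nonneg_bounded[where x="1 / u (Suc b)"])
         (use pos in \<open>auto simp: bd_ratio_prod_nonneg bd_scale_def field_simps mult.commute\<close>)
    with not_summable show False ..
  qed
  have "u (b - 1) = u 0" using harm_below diff_le_self by (rule harmonic_below)
  moreover have "u b = u 0" using harm_below order_refl by (rule harmonic_below)
  ultimately have left: "u (b - 1) = 0" using u_b by simp
  have "bd_reach up b b = bd_avg up hit b"
    using bd_reach_first_step[of b b] by (simp add: hit_def)
  also have "\<dots> = 1"
    using right left up_0 by (cases b) (auto simp: bd_avg_def u_def hit_def algebra_simps)
  finally show ?thesis .
qed

text \<open>Convergence of the scale function gives a superharmonic majorant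
  1 - scale / S that is strictly below 1 at b+1, so return is not certain.\<close>

lemma transient_if_summable:
  assumes summable: "summable (bd_ratio_prod up b)"
  shows "bd_reach up b b < 1"
proof -
  define S where "S = suminf (bd_ratio_prod up b)"
  have scale_le_S: "bd_scale up b w \<le> S" for w
    unfolding bd_scale_def S_def by (rule sum_le_suminf[OF summable]) (auto simp: bd_ratio_prod_nonneg)
  have S_ge_1: "1 \<le> S" using scale_le_S[of "Suc b"] by (simp add: bd_scale_def bd_ratio_prod_def)
  define g where "g w = 1 - bd_scale up b w / S" for w
  have "bd_reach up b (Suc b) \<le> g (Suc b)"
  proof (rule bd_reach_le_superharmonic)
    show "0 \<le> g w" for w using scale_le_S[of w] S_ge_1 by (simp add: g_def)
    show "1 \<le> g b" by (simp add: g_def bd_scale_le)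
    show "bd_avg up g z \<le> g z" for z
      using bd_scale_subharmonic[of b z] S_ge_1 unfolding g_def bd_avg_affine
      by (simp add: divide_right_mono)
  qed
  also have "\<dots> < 1" using S_ge_1 by (simp add: g_def bd_scale_def bd_ratio_prod_def)
  finally have right: "bd_reach up b (Suc b) < 1" .
  have "bd_reach up b b = bd_avg up (\<lambda>w. if w = b then 1 else bd_reach up b w) b"
    by (rule bd_reach_first_step)
  also have "\<dots> < 1"
  proof -
    have "up b * bd_reach up b (Suc b) < up b" using right up_pos[of b] by simp
    moreover have "(1 - up b) * bd_reach up b (b - 1) \<le> 1 - up b"
      using bd_reach_bounds(2)[of b "b - 1"] up_le_1[of b] by (simp add: mult_left_le)
    ultimately show ?thesis by (cases "b = 0") (auto simp: bd_avg_def up_0)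
  qed
  finally show ?thesis .
qed

end

lemma return_prob_enumeration:
  assumes "birth_death up" "bij_betw enc UNIV S"
    and "\<And>a c. jump_prob S q (enc a) (enc c) = bd_step up a c"
  shows "summable (\<lambda>n. first_passage S q n (enc a) (enc a))
    \<and> return_prob S q (enc a) = bd_reach up a a"
  unfolding return_prob_def first_passage_enumeration[OF assms(2,3)]
  by (rule birth_death.return_prob_eq_reach[OF assms(1)])

lemma recurrent_process_birth_death:
  assumes "birth_death up" "bij_betw enc UNIV S"
    and "\<And>a c. jump_prob S q (enc a) (enc c) = bd_step up a c"
    and "\<And>b. \<not> summable (bd_ratio_prod up b)"
  shows "recurrent_process S q"
  unfolding recurrent_process_def
proof
  fix x assume "x \<in> S"
  then obtain a where "x = enc a" using assms(2) by (auto simp: bij_betw_def)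
  then show "recurrent_state S q x"
    using return_prob_enumeration[OF assms(1-3), of a]
      birth_death.recurrent_if_not_summable[OF assms(1,4)]
    by (simp add: recurrent_state_def)
qed

lemma transient_process_birth_death:
  assumes "birth_death up" "bij_betw enc UNIV S"
    and "\<And>a c. jump_prob S q (enc a) (enc c) = bd_step up a c"
    and "\<And>b. summable (bd_ratio_prod up b)"
  shows "transient_process S q"
  unfolding transient_process_def
proof
  fix x assume "x \<in> S"
  then obtain a where "x = enc a" using assms(2) by (auto simp: bij_betw_def)
  then show "transient_state S q x"
    using return_prob_enumeration[OF assms(1-3), of a]
      birth_death.transient_if_summable[OF assms(1,4)]
    by (simp add: transient_state_def)
qed

text \<open>Summability of bd_ratio_prod up b does not depend on b, since the products for
  b and 0 differ by a positive factor; so it suffices to check b = 0.\<close>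

lemma bd_ratio_prod_shift: "bd_ratio_prod up 0 (b + j) = bd_ratio_prod up 0 b * bd_ratio_prod up b j"
  unfolding bd_ratio_prod_def
  by (subst prod.union_disjoint[symmetric]) (auto intro!: prod.cong)

lemma summable_bd_ratio_prod_shift:
  assumes "summable (bd_ratio_prod up 0)" "0 < bd_ratio_prod up 0 b"
  shows "summable (bd_ratio_prod up b)"
proof -
  have "summable (\<lambda>j. bd_ratio_prod up 0 (j + b) / bd_ratio_prod up 0 b)"
    using assms(1) by (intro summable_divide) simp
  moreover have "bd_ratio_prod up 0 (j + b) / bd_ratio_prod up 0 b = bd_ratio_prod up b j" for j
    using bd_ratio_prod_shift[of up b j] assms(2) by (simp add: add.commute)
  ultimately show ?thesis by simp
qed

section \<open>The birth-death process on N_0\<close>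

definition up_N :: "nat \<Rightarrow> real" where "up_N x = qrate x (Suc x)"

lemma up_N_pos: "0 < a \<Longrightarrow> up_N a = (2 * real a + 1) / (4 * real a)"
  by (simp add: up_N_def qrate_def)

lemma birth_death_up_N: "birth_death up_N"
proof
  show "up_N 0 = 1" by (simp add: up_N_def qrate_def)
  show "0 < up_N a" for a by (cases "a = 0") (auto simp: up_N_def qrate_def)
  show "up_N a < 1" if "0 < a" for a using that by (simp add: up_N_pos field_simps)
qed

lemma qrate_down: "0 < a \<Longrightarrow> qrate a (a - 1) = 1 - up_N a"
  by (auto simp: qrate_def up_N_def)

text \<open>The total jump rate out of every state is 1, so the jump chain is the
  birth-death chain with up-probabilities up_N.\<close>

lemma jump_prob_N: "jump_prob UNIV qrate a c = bd_step up_N a c"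
proof -
  have "infsum (qrate a) (UNIV - {a}) = qrate a (Suc a) + (if 0 < a then qrate a (a - 1) else 0)"
    by (subst infsum_neighbours[where a=a]) (auto simp: qrate_def)
  then have total: "infsum (qrate a) (UNIV - {a}) = 1"
    using qrate_down[of a] birth_death.up_0[OF birth_death_up_N]
    by (cases "a = 0") (simp_all add: up_N_def[symmetric])
  then show ?thesis
    using qrate_down[of a] by (auto simp: jump_prob_def bd_step_def up_N_def qrate_def)
qed

lemma bd_ratio_N: "0 < i \<Longrightarrow> bd_ratio up_N i = (2 * real i - 1) / (2 * real i + 1)"
proof -
  assume "0 < i"
  then have "bd_ratio up_N i = (1 - (2 * real i + 1) / (4 * real i)) / ((2 * real i + 1) / (4 * real i))"
    by (simp add: bd_ratio_def up_N_pos)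
  also have "\<dots> = (2 * real i - 1) / (2 * real i + 1)"
    using \<open>0 < i\<close> by (simp add: divide_simps)
  finally show ?thesis .
qed

lemma bd_ratio_prod_N: "bd_ratio_prod up_N b j = (2 * real b + 1) / (2 * real b + 2 * real j + 1)"
proof (induction j)
  case 0
  then show ?case by (simp add: bd_ratio_prod_def)
next
  case (Suc j)
  have "bd_ratio up_N (b + Suc j) = (2 * real (b + Suc j) - 1) / (2 * real (b + Suc j) + 1)"
    by (rule bd_ratio_N) simp
  also have "\<dots> = (2 * real b + 2 * real j + 1) / (2 * real b + 2 * real (Suc j) + 1)"
    by simp
  finally have step: "bd_ratio up_N (b + Suc j)
      = (2 * real b + 2 * real j + 1) / (2 * real b + 2 * real (Suc j) + 1)" .
  have cancel: "(D::real) \<noteq> 0 \<Longrightarrow> c / D * (D / E) = c / E" for c D E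
    by simp
  show ?case
    unfolding birth_death.bd_ratio_prod_Suc[OF birth_death_up_N] Suc step
    by (rule cancel) (simp add: add_pos_nonneg)
qed

text \<open>The products decay like 1/j, so their series diverges by comparison with the
  harmonic series.\<close>

lemma not_summable_ratio_prod_N: "\<not> summable (bd_ratio_prod up_N b)"
proof
  assume "summable (bd_ratio_prod up_N b)"
  then have "summable (\<lambda>j. 2 * bd_ratio_prod up_N b j)" by (rule summable_mult)
  then have "summable (\<lambda>j. inverse (real (Suc j)))"
    by (rule summable_comparison_test[rotated])
       (intro exI[of _ 0] allI impI, simp add: bd_ratio_prod_N field_simps)
  then have "summable (\<lambda>j. inverse (real j))" by (rule summable_Suc_iff[THEN iffD1])
  then show False using not_summable_harmonic by blast
qed

theorem recurrent_N: "recurrent_process (UNIV :: nat set) qrate"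
  by (rule recurrent_process_birth_death[OF birth_death_up_N, of id])
     (auto simp: jump_prob_N not_summable_ratio_prod_N)

section \<open>The spider as a birth-death chain\<close>

text \<open>Enumeration of the spider states: 2x is (x, x+1) and 2x+1 is (x, x+2).\<close>

definition spider_enum :: "nat \<Rightarrow> nat \<times> nat" where
  "spider_enum c = (c div 2, (c + 3) div 2)"

lemma spider_enum_even: "spider_enum (2 * x) = (x, Suc x)"
  by (simp add: spider_enum_def)

lemma spider_enum_odd: "spider_enum (Suc (2 * x)) = (x, Suc (Suc x))"
  by (simp add: spider_enum_def)

lemma nat_parity_cases: obtains x where "a = 2 * x" | x where "a = Suc (2 * x)"
  by (metis oddE evenE Suc_eq_plus1)

lemma spider_states_in: "(x, Suc x) \<in> spider_states" "(x, Suc (Suc x)) \<in> spider_states"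
  by (auto simp: spider_states_def)

lemma spider_enum_legs: "fst (spider_enum c) + snd (spider_enum c) = Suc c"
  by (cases c rule: nat_parity_cases) (simp_all add: spider_enum_even spider_enum_odd)

lemma bij_spider_enum: "bij_betw spider_enum UNIV spider_states"
proof -
  have "inj spider_enum"
    by (rule inj_on_inverseI[where g="\<lambda>p. fst p + snd p - 1"]) (simp add: spider_enum_legs)
  moreover have "range spider_enum = spider_states"
  proof
    show "range spider_enum \<subseteq> spider_states"
    proof
      fix p assume "p \<in> range spider_enum"
      then obtain c where "p = spider_enum c" by auto
      then show "p \<in> spider_states"
        by (cases c rule: nat_parity_cases) (simp_all add: spider_enum_even spider_enum_odd spider_states_in)
    qed
    show "spider_states \<subseteq> range spider_enum"
    proof
      fix p assume "p \<in> spider_states"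
      then obtain x where "p = (x, Suc x) \<or> p = (x, Suc (Suc x))"
        by (auto simp: spider_states_def)
      then show "p \<in> range spider_enum" by (metis rangeI spider_enum_even spider_enum_odd)
    qed
  qed
  ultimately show ?thesis by (simp add: bij_betw_def)
qed

text \<open>Rates of the spider in the enumeration: moving from index a to a+1 moves the
  front leg up (a even) or the back leg up (a odd), and symmetrically downwards.\<close>

definition spider_up :: "nat \<Rightarrow> real" where
  "spider_up a = (if even a then up_N (a div 2 + 1) else up_N (a div 2))"

definition spider_down :: "nat \<Rightarrow> real" where
  "spider_down a = (if even a then 1 - up_N (a div 2) else 1 - up_N (a div 2 + 2))"

lemma spider_rate_enum:
  "spider_rate (spider_enum a) (spider_enum c) =
     (if c = Suc a then spider_up a else if Suc c = a then spider_down a else 0)"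
proof -
  have parity: "Suc (2 * y) \<noteq> 2 * x" "Suc (Suc (2 * y)) = 2 * x \<longleftrightarrow> x = Suc y" for x y :: nat
    by presburger+
  show ?thesis
    by (cases a rule: nat_parity_cases; cases c rule: nat_parity_cases)
       (auto simp: spider_rate_def spider_enum_even spider_enum_odd spider_states_in adjacent_def
         qrate_def up_N_def spider_up_def spider_down_def parity parity(1)[symmetric])
qed

lemma spider_up_pos: "0 < spider_up a"
  using birth_death.up_pos[OF birth_death_up_N] by (simp add: spider_up_def)

lemma spider_down_pos: "0 < a \<Longrightarrow> 0 < spider_down a"
  using birth_death.up_lt_1[OF birth_death_up_N]
  by (cases a rule: nat_parity_cases) (auto simp: spider_down_def)

definition up_S :: "nat \<Rightarrow> real" where
  "up_S a = spider_up a / (spider_up a + (if 0 < a then spider_down a else 0))"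

lemma birth_death_up_S: "birth_death up_S"
proof
  show "up_S 0 = 1" using spider_up_pos[of 0] by (simp add: up_S_def)
  show "0 < up_S a" for a
    using spider_up_pos[of a] spider_down_pos[of a] by (cases "a = 0") (auto simp: up_S_def)
  show "up_S a < 1" if "0 < a" for a
    using spider_up_pos[of a] spider_down_pos[OF that] that by (simp add: up_S_def)
qed

lemma jump_prob_S:
  "jump_prob spider_states spider_rate (spider_enum a) (spider_enum c) = bd_step up_S a c"
proof -
  have inj: "inj spider_enum" using bij_spider_enum by (simp add: bij_betw_def)
  have "infsum (spider_rate (spider_enum a)) (spider_states - {spider_enum a})
      = infsum (\<lambda>c. spider_rate (spider_enum a) (spider_enum c)) (UNIV - {a})"
    by (rule infsum_enumeration[OF bij_spider_enum])
  also have "\<dots> = spider_up a + (if 0 < a then spider_down a else 0)"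
    by (subst infsum_neighbours[where a=a]) (auto simp: spider_rate_enum)
  finally have total: "infsum (spider_rate (spider_enum a)) (spider_states - {spider_enum a})
      = spider_up a + (if 0 < a then spider_down a else 0)" .
  have in_states: "spider_enum c \<in> spider_states"
    using bij_spider_enum by (auto simp: bij_betw_def)
  have "spider_down a / (spider_up a + spider_down a) = 1 - up_S a" if "0 < a"
    using spider_up_pos[of a] spider_down_pos[OF that] that by (simp add: up_S_def field_simps)
  then show ?thesis
    using inj by (auto simp: jump_prob_def total bd_step_def in_states spider_rate_enum
        up_S_def inj_eq)
qed

lemma bd_ratio_S: "0 < i \<Longrightarrow> bd_ratio up_S i = spider_down i / spider_up i"
  using spider_up_pos[of i] spider_down_pos[of i] by (simp add: bd_ratio_def up_S_def divide_simps)

lemma bd_ratio_S_even: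
  "bd_ratio up_S (2 * n + 2) = (2 * real n + 1) * (real n + 2) / ((real n + 1) * (2 * real n + 5))"
proof -
  have "bd_ratio up_S (2 * n + 2) = (1 - up_N (n + 1)) / up_N (n + 2)"
    by (simp add: bd_ratio_S spider_up_def spider_down_def)
  also have "\<dots> = (1 - (2 * real n + 3) / (4 * real n + 4)) / ((2 * real n + 5) / (4 * real n + 8))"
    by (simp add: up_N_pos algebra_simps)
  also have "\<dots> = (2 * real n + 1) * (real n + 2) / ((real n + 1) * (2 * real n + 5))"
    by (simp add: divide_simps) (simp add: algebra_simps)
  finally show ?thesis .
qed

lemma bd_ratio_S_odd:
  "bd_ratio up_S (2 * n + 3) = (2 * real n + 5) * (real n + 1) / ((real n + 3) * (2 * real n + 3))"
proof -
  have e: "2 * n + 3 = Suc (2 * (n + 1))" by simp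
  have "bd_ratio up_S (2 * n + 3) = (1 - up_N (n + 3)) / up_N (n + 1)"
    unfolding e by (simp add: bd_ratio_S spider_up_def spider_down_def numeral_3_eq_3)
  also have "\<dots> = (1 - (2 * real n + 7) / (4 * real n + 12)) / ((2 * real n + 3) / (4 * real n + 4))"
    by (simp add: up_N_pos algebra_simps)
  also have "\<dots> = (2 * real n + 5) * (real n + 1) / ((real n + 3) * (2 * real n + 3))"
    by (simp add: divide_simps) (simp add: algebra_simps)
  finally show ?thesis .
qed

lemma bd_ratio_prod_S_Suc: "bd_ratio_prod up_S 0 (Suc k) = bd_ratio_prod up_S 0 k * bd_ratio up_S (Suc k)"
  using birth_death.bd_ratio_prod_Suc[OF birth_death_up_S, of 0 k] by simp

lemma bd_ratio_prod_S_closed: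
  "bd_ratio_prod up_S 0 (2 * n + 1) = 3 / (4 * (2 * real n + 1) * (real n + 2)) \<and>
   bd_ratio_prod up_S 0 (2 * n + 2) = 3 / (4 * (real n + 1) * (2 * real n + 5))"
proof (induction n)
  case 0
  have "bd_ratio up_S 1 = 3 / 8"
    by (simp add: bd_ratio_S spider_up_def spider_down_def up_N_pos
        birth_death.up_0[OF birth_death_up_N])
  then have one: "bd_ratio_prod up_S 0 1 = 3 / 8"
    using bd_ratio_prod_S_Suc[of 0] by (simp add: bd_ratio_prod_def)
  have two: "bd_ratio up_S 2 = 2 / 5" using bd_ratio_S_even[of 0] by (simp add: numeral_2_eq_2)
  have "bd_ratio_prod up_S 0 2 = bd_ratio_prod up_S 0 1 * bd_ratio up_S 2"
    using bd_ratio_prod_S_Suc[of 1] by (simp add: numeral_2_eq_2)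
  then have "bd_ratio_prod up_S 0 2 = 3 / 20" unfolding one two by simp
  with one show ?case by (simp add: numeral_2_eq_2)
next
  case (Suc n)
  have odd_step: "bd_ratio_prod up_S 0 (2 * Suc n + 1) = bd_ratio_prod up_S 0 (2 * n + 2) * bd_ratio up_S (2 * n + 3)"
    using bd_ratio_prod_S_Suc[of "2 * n + 2"] by (simp add: numeral_3_eq_3)
  have even_step: "bd_ratio_prod up_S 0 (2 * Suc n + 2) = bd_ratio_prod up_S 0 (2 * Suc n + 1) * bd_ratio up_S (2 * Suc n + 2)"
    using bd_ratio_prod_S_Suc[of "2 * Suc n + 1"] by simp
  have odd: "bd_ratio_prod up_S 0 (2 * Suc n + 1) = 3 / (4 * (2 * real (Suc n) + 1) * (real (Suc n) + 2))"
    unfolding odd_step bd_ratio_S_odd Suc.IH[THEN conjunct2]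
    by (simp add: divide_simps) (simp add: algebra_simps)
  moreover have "bd_ratio_prod up_S 0 (2 * Suc n + 2) = 3 / (4 * (real (Suc n) + 1) * (2 * real (Suc n) + 5))"
    unfolding even_step odd bd_ratio_S_even
    by (simp add: divide_simps) (simp add: algebra_simps)
  ultimately show ?case by blast
qed

lemma bd_ratio_prod_S_bound: "bd_ratio_prod up_S 0 (Suc k) \<le> 3 / (real k + 1)^2"
proof (cases k rule: nat_parity_cases)
  case (1 n)
  then have "bd_ratio_prod up_S 0 (Suc k) = 3 / (4 * (2 * real n + 1) * (real n + 2))"
    using bd_ratio_prod_S_closed[of n] by simp
  also have "\<dots> \<le> 3 / (real k + 1)^2"
  proof (rule frac_le)
    show "(real k + 1)^2 \<le> 4 * (2 * real n + 1) * (real n + 2)"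
      using 1 by (simp add: power2_eq_square algebra_simps)
  qed simp_all
  finally show ?thesis .
next
  case (2 n)
  then have "bd_ratio_prod up_S 0 (Suc k) = 3 / (4 * (real n + 1) * (2 * real n + 5))"
    using bd_ratio_prod_S_closed[of n] by (simp add: numeral_2_eq_2)
  also have "\<dots> \<le> 3 / (real k + 1)^2"
  proof (rule frac_le)
    show "(real k + 1)^2 \<le> 4 * (real n + 1) * (2 * real n + 5)"
      using 2 by (simp add: power2_eq_square algebra_simps)
  qed simp_all
  finally show ?thesis .
qed

lemma summable_ratio_prod_S: "summable (bd_ratio_prod up_S b)"
proof (rule summable_bd_ratio_prod_shift)
  have "summable (\<lambda>n. 3 * (1 / (real n + 1)^2))"
    using inverse_squares_sums by (intro summable_mult) (simp add: sums_iff add.commute)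
  then have "summable (\<lambda>k. bd_ratio_prod up_S 0 (Suc k))"
    by (rule summable_comparison_test[rotated])
       (use bd_ratio_prod_S_bound birth_death.bd_ratio_prod_nonneg[OF birth_death_up_S] in auto)
  then show "summable (bd_ratio_prod up_S 0)" by (rule summable_Suc_iff[THEN iffD1])
  have "0 < bd_ratio up_S i" if "0 < i" for i
    using spider_up_pos[of i] spider_down_pos[OF that] bd_ratio_S[OF that] by simp
  then show "0 < bd_ratio_prod up_S 0 b" unfolding bd_ratio_prod_def by (intro prod_pos) auto
qed

theorem transient_spider: "transient_process spider_states spider_rate"
  by (rule transient_process_birth_death
      [OF birth_death_up_S bij_spider_enum jump_prob_S summable_ratio_prod_S])

theorem mainTheorem7:
  shows "recurrent_process (UNIV :: nat set) qrate \<and> transient_process spider_states spider_rate"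
  using recurrent_N transient_spider by blast

end
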